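(* Let $\mathcal J$ be a generalized almost complex structure on a Courant algebroid $E$. (i) The endomorphism $\Pi_{\mathcal J}$ of $\Lambda^3E^*$ defined by $$(\Pi_{\mathcal J}\alpha)(u,v,w)=\tfrac14\big(\alpha(u,v,w)-\alpha(u,\mathcal Jv,\mathcal Jw)-\alpha(\mathcal Ju,v,\mathcal Jw)-\alpha(\mathcal Ju,\mathcal Jv,w)\big)$$ is a projector (i.e. $\Pi_{\mathcal J}^2=\Pi_{\mathcal J}$) with image the subbundle $\Lambda^3_{\mathcal J}E^*=\{\alpha\in\Lambda^3E^*:\alpha(\mathcal Ju,v,w)=\alpha(u,\mathcal Jv,w)=\alpha(u,v,\mathcal Jw)\ \forall u,v,w\}$. (ii) $\mathrm{im}\,\partial_{\mathcal J}=\ker\Pi_{\mathcal J}$.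
   Context: A Courant algebroid is a real vector bundle $E\to M$ with a nondegenerate symmetric bilinear form $\langle\cdot,\cdot\rangle$, a Dorfman bracket and an anchor satisfying the Courant algebroid axioms; only the bundle $E$ with $\langle\cdot,\cdot\rangle$ matters here. A generalized almost complex structure is a $\langle\cdot,\cdot\rangle$-orthogonal endomorphism $\mathcal J$ of $E$ with $\mathcal J^2=-\mathrm{Id}$. $\Lambda^{1,1}_{\mathcal J}E^*$ is the bundle of 2-forms $\beta$ on $E$ with $\beta(\mathcal Ju,\mathcal Jv)=\beta(u,v)$. Elements $\eta\in E^*\otimes\Lambda^{1,1}_{\mathcal J}E^*$ are written $\eta(u,v,w)$ (a 2-form in $(v,w)$ for each $u$), and $\partial_{\mathcal J}:E^*\otimes\Lambda^{1,1}_{\mathcal J}E^*\to\Lambda^3E^*$ is $(\partial_{\mathcal J}\eta)(u,v,w)=\eta(u,v,w)+\eta(w,u,v)+\eta(v,w,u)$. *)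

theory Defs
  imports "HOL-Analysis.Analysis"
begin

(* Fibrewise model: a fibre of E is a finite-dimensional real vector space 'a. *)

definition trilinear :: "('a::real_vector \<Rightarrow> 'a \<Rightarrow> 'a \<Rightarrow> real) \<Rightarrow> bool" where
  "trilinear \<alpha> \<longleftrightarrow>
     (\<forall>v w. linear (\<lambda>u. \<alpha> u v w)) \<and>
     (\<forall>u w. linear (\<lambda>v. \<alpha> u v w)) \<and>
     (\<forall>u v. linear (\<lambda>w. \<alpha> u v w))"

definition Lambda3 :: "('a::real_vector \<Rightarrow> 'a \<Rightarrow> 'a \<Rightarrow> real) set" where
  "Lambda3 = {\<alpha>. trilinear \<alpha> \<and>
                 (\<forall>u v w. \<alpha> v u w = - \<alpha> u v w) \<and>
                 (\<forall>u v w. \<alpha> u w v = - \<alpha> u v w)}"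

definition nondeg_sym_form :: "('a::real_vector \<Rightarrow> 'a \<Rightarrow> real) \<Rightarrow> bool" where
  "nondeg_sym_form g \<longleftrightarrow> bilinear g \<and> (\<forall>u v. g u v = g v u) \<and>
     (\<forall>u. (\<forall>v. g u v = 0) \<longrightarrow> u = 0)"

definition gen_almost_complex :: "('a::real_vector \<Rightarrow> 'a \<Rightarrow> real) \<Rightarrow> ('a \<Rightarrow> 'a) \<Rightarrow> bool" where
  "gen_almost_complex g J \<longleftrightarrow> linear J \<and> (\<forall>u v. g (J u) (J v) = g u v) \<and>
     (\<forall>u. J (J u) = - u)"

definition PiJ :: "('a \<Rightarrow> 'a) \<Rightarrow> ('a \<Rightarrow> 'a \<Rightarrow> 'a \<Rightarrow> real) \<Rightarrow> ('a \<Rightarrow> 'a \<Rightarrow> 'a \<Rightarrow> real)" where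
  "PiJ J \<alpha> = (\<lambda>u v w. (\<alpha> u v w - \<alpha> u (J v) (J w) - \<alpha> (J u) v (J w) - \<alpha> (J u) (J v) w) / 4)"

definition Lambda3_J :: "('a::real_vector \<Rightarrow> 'a) \<Rightarrow> ('a \<Rightarrow> 'a \<Rightarrow> 'a \<Rightarrow> real) set" where
  "Lambda3_J J = {\<alpha> \<in> Lambda3. \<forall>u v w. \<alpha> (J u) v w = \<alpha> u (J v) w \<and> \<alpha> u (J v) w = \<alpha> u v (J w)}"

(* E^* \<otimes> Lambda^{1,1}_J E^* : trilinear, alternating and J-invariant in the last two slots *)
definition E_Lambda11 :: "('a::real_vector \<Rightarrow> 'a) \<Rightarrow> ('a \<Rightarrow> 'a \<Rightarrow> 'a \<Rightarrow> real) set" where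
  "E_Lambda11 J = {\<eta>. trilinear \<eta> \<and> (\<forall>u v w. \<eta> u w v = - \<eta> u v w) \<and>
                      (\<forall>u v w. \<eta> u (J v) (J w) = \<eta> u v w)}"

definition dJ :: "('a \<Rightarrow> 'a \<Rightarrow> 'a \<Rightarrow> real) \<Rightarrow> ('a \<Rightarrow> 'a \<Rightarrow> 'a \<Rightarrow> real)" where
  "dJ \<eta> = (\<lambda>u v w. \<eta> u v w + \<eta> w u v + \<eta> v w u)"

end

theory Submission
  imports Defs
begin

text \<open>
  Only linearity of \<open>J\<close> and \<open>J\<^sup>2 = -1\<close> enter.
  For \<open>\<alpha> \<in> \<Lambda>\<^sup>3\<close> the form \<open>\<Pi>\<^sub>J \<alpha>\<close> is \<open>J\<close>-compatible in all slots, and \<open>\<Pi>\<^sub>J\<close> fixes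
  \<open>J\<close>-compatible forms; this gives (i).
  For (ii), \<open>\<Pi>\<^sub>J \<partial>\<^sub>J \<eta> = 0\<close> because \<open>\<eta>\<close> is \<open>J\<close>-invariant in its last two slots.
  Conversely, let \<open>\<eta> \<in> E\<^sup>* \<otimes> \<Lambda>\<^sup>1\<^sup>,\<^sup>1\<close> be half the \<open>(1,1)\<close>-part of \<open>\<alpha>\<close> in its last two slots;
  the cyclic symmetry of \<open>\<alpha>\<close> gives \<open>\<partial>\<^sub>J \<eta> = \<alpha> - \<Pi>\<^sub>J \<alpha>\<close>, so the kernel of \<open>\<Pi>\<^sub>J\<close> lies in the
  image of \<open>\<partial>\<^sub>J\<close>.
\<close>

lemma trilinear_iff:
  "trilinear \<alpha> \<longleftrightarrow>
    (\<forall>u u' v w. \<alpha> (u + u') v w = \<alpha> u v w + \<alpha> u' v w) \<and>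
    (\<forall>c u v w. \<alpha> (c *\<^sub>R u) v w = c * \<alpha> u v w) \<and>
    (\<forall>u v v' w. \<alpha> u (v + v') w = \<alpha> u v w + \<alpha> u v' w) \<and>
    (\<forall>c u v w. \<alpha> u (c *\<^sub>R v) w = c * \<alpha> u v w) \<and>
    (\<forall>u v w w'. \<alpha> u v (w + w') = \<alpha> u v w + \<alpha> u v w') \<and>
    (\<forall>c u v w. \<alpha> u v (c *\<^sub>R w) = c * \<alpha> u v w)"
  unfolding trilinear_def linear_iff by auto

lemma trilinear_minus:
  assumes "trilinear \<alpha>"
  shows "\<alpha> (- u) v w = - \<alpha> u v w" "\<alpha> u (- v) w = - \<alpha> u v w" "\<alpha> u v (- w) = - \<alpha> u v w"
proof -
  have "linear (\<lambda>u. \<alpha> u v w)" "linear (\<lambda>v. \<alpha> u v w)" "linear (\<lambda>w. \<alpha> u v w)"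
    using assms unfolding trilinear_def by blast+
  then show "\<alpha> (- u) v w = - \<alpha> u v w" "\<alpha> u (- v) w = - \<alpha> u v w" "\<alpha> u v (- w) = - \<alpha> u v w"
    by (simp_all add: linear_neg[of "\<lambda>u. \<alpha> u v w"] linear_neg[of "\<lambda>v. \<alpha> u v w"]
        linear_neg[of "\<alpha> u v"])
qed

lemma trilinear_PiJ:
  assumes "linear J" and "trilinear \<alpha>"
  shows "trilinear (PiJ J \<alpha>)"
  using assms(2) unfolding trilinear_iff PiJ_def
  by (simp add: linear_add[OF assms(1)] linear_scale[OF assms(1)] field_simps)

lemma trilinear_dJ:
  assumes "trilinear \<eta>"
  shows "trilinear (dJ \<eta>)"
  using assms unfolding trilinear_iff dJ_def by (simp add: field_simps)

lemma Lambda3_cyclic: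
  assumes "\<alpha> \<in> Lambda3"
  shows "\<alpha> w u v = \<alpha> u v w"
proof -
  have "\<alpha> w u v = - \<alpha> u w v" "\<alpha> u w v = - \<alpha> u v w"
    using assms unfolding Lambda3_def by blast+
  then show ?thesis by simp
qed

lemma PiJ_Lambda3:
  assumes "linear J" and "\<alpha> \<in> Lambda3"
  shows "PiJ J \<alpha> \<in> Lambda3"
proof -
  have tri: "trilinear \<alpha>" and swap12: "\<And>u v w. \<alpha> v u w = - \<alpha> u v w"
    and swap23: "\<And>u v w. \<alpha> u w v = - \<alpha> u v w"
    using assms(2) unfolding Lambda3_def by blast+
  have "PiJ J \<alpha> v u w = - PiJ J \<alpha> u v w" for u v w
    unfolding PiJ_def
    using swap12[of u v w] swap12[of "J u" v "J w"] swap12[of u "J v" "J w"] swap12[of "J u" "J v" w]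
    by (simp only: diff_divide_distrib minus_divide_left[symmetric])
  moreover have "PiJ J \<alpha> u w v = - PiJ J \<alpha> u v w" for u v w
    unfolding PiJ_def
    using swap23[of u v w] swap23[of u "J v" "J w"] swap23[of "J u" v "J w"] swap23[of "J u" "J v" w]
    by (simp only: diff_divide_distrib minus_divide_left[symmetric])
  ultimately show ?thesis
    using trilinear_PiJ[OF assms(1) tri] unfolding Lambda3_def by blast
qed

lemma PiJ_compatible:
  assumes "\<And>u. J (J u) = - u" and "trilinear \<alpha>"
  shows "PiJ J \<alpha> (J u) v w = PiJ J \<alpha> u (J v) w" "PiJ J \<alpha> u (J v) w = PiJ J \<alpha> u v (J w)"
  unfolding PiJ_def by (simp_all add: assms(1) trilinear_minus[OF assms(2)])

lemma PiJ_Lambda3_J: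
  assumes "linear J" and "\<And>u. J (J u) = - u" and "\<alpha> \<in> Lambda3"
  shows "PiJ J \<alpha> \<in> Lambda3_J J"
  using PiJ_Lambda3[OF assms(1,3)] PiJ_compatible[OF assms(2)] assms(3)
  unfolding Lambda3_J_def Lambda3_def by blast

lemma PiJ_fixes_Lambda3_J:
  assumes JJ: "\<And>u. J (J u) = - u" and "\<alpha> \<in> Lambda3_J J"
  shows "PiJ J \<alpha> = \<alpha>"
proof -
  have tri: "trilinear \<alpha>" and compat: "\<And>u v w. \<alpha> (J u) v w = \<alpha> u (J v) w"
    "\<And>u v w. \<alpha> u (J v) w = \<alpha> u v (J w)"
    using assms(2) unfolding Lambda3_J_def Lambda3_def by blast+
  have "\<alpha> u (J v) (J w) = - \<alpha> u v w" "\<alpha> (J u) v (J w) = - \<alpha> u v w"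
    "\<alpha> (J u) (J v) w = - \<alpha> u v w" for u v w
    using compat[of u "J v" w] compat[of u v "J w"] compat[of u "J v" "J w"] compat[of u v w]
      compat[of "J u" v w]
    by (simp_all add: JJ trilinear_minus[OF tri])
  then show ?thesis unfolding PiJ_def by (simp add: fun_eq_iff)
qed

lemma dJ_E_Lambda11:
  assumes "\<eta> \<in> E_Lambda11 J"
  shows "dJ \<eta> \<in> Lambda3"
proof -
  have tri: "trilinear \<eta>" and swap23: "\<And>u v w. \<eta> u w v = - \<eta> u v w"
    using assms unfolding E_Lambda11_def by blast+
  have "dJ \<eta> v u w = - dJ \<eta> u v w" "dJ \<eta> u w v = - dJ \<eta> u v w" for u v w
    unfolding dJ_def using swap23[of v w u] swap23[of w u v] swap23[of u v w] by simp_all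
  then show ?thesis using trilinear_dJ[OF tri] unfolding Lambda3_def by blast
qed

lemma PiJ_dJ_E_Lambda11:
  assumes JJ: "\<And>u. J (J u) = - u" and "\<eta> \<in> E_Lambda11 J"
  shows "PiJ J (dJ \<eta>) = (\<lambda>u v w. 0)"
proof -
  have tri: "trilinear \<eta>" and inv: "\<And>u v w. \<eta> u (J v) (J w) = \<eta> u v w"
    using assms(2) unfolding E_Lambda11_def by blast+
  have anti: "\<eta> u (J v) w = - \<eta> u v (J w)" for u v w
    using inv[of u "J v" w] by (simp add: JJ trilinear_minus[OF tri])
  show ?thesis
    unfolding PiJ_def dJ_def by (simp add: fun_eq_iff inv anti JJ trilinear_minus[OF tri])
qed

definition dJ_lift :: "('a \<Rightarrow> 'a) \<Rightarrow> ('a \<Rightarrow> 'a \<Rightarrow> 'a \<Rightarrow> real) \<Rightarrow> ('a \<Rightarrow> 'a \<Rightarrow> 'a \<Rightarrow> real)" where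
  "dJ_lift J \<alpha> = (\<lambda>u v w. (\<alpha> u v w + \<alpha> u (J v) (J w)) / 4)"

lemma dJ_lift_E_Lambda11:
  assumes "linear J" and JJ: "\<And>u. J (J u) = - u" and "\<alpha> \<in> Lambda3"
  shows "dJ_lift J \<alpha> \<in> E_Lambda11 J"
proof -
  have tri: "trilinear \<alpha>" and swap23: "\<And>u v w. \<alpha> u w v = - \<alpha> u v w"
    using assms(3) unfolding Lambda3_def by blast+
  have "trilinear (dJ_lift J \<alpha>)"
    using tri unfolding trilinear_iff dJ_lift_def
    by (simp add: linear_add[OF assms(1)] linear_scale[OF assms(1)] field_simps)
  moreover have "dJ_lift J \<alpha> u w v = - dJ_lift J \<alpha> u v w" for u v w
    unfolding dJ_lift_def using swap23[of u v w] swap23[of u "J v" "J w"]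
    by (simp only: add_divide_distrib minus_divide_left[symmetric])
  moreover have "dJ_lift J \<alpha> u (J v) (J w) = dJ_lift J \<alpha> u v w" for u v w
    unfolding dJ_lift_def by (simp add: JJ trilinear_minus[OF tri])
  ultimately show ?thesis unfolding E_Lambda11_def by blast
qed

lemma dJ_dJ_lift:
  assumes cyclic: "\<And>u v w. \<alpha> w u v = \<alpha> u v w"
  shows "dJ (dJ_lift J \<alpha>) = (\<lambda>u v w. \<alpha> u v w - PiJ J \<alpha> u v w)"
proof (intro ext)
  fix u v w
  show "dJ (dJ_lift J \<alpha>) u v w = \<alpha> u v w - PiJ J \<alpha> u v w"
    unfolding dJ_def dJ_lift_def PiJ_def
    using cyclic[of w u v] cyclic[of u v w] cyclic[of w "J u" "J v"] cyclic[of "J u" v "J w"]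
    by argo
qed

lemma PiJ_idem:
  assumes "linear J" and "\<And>u. J (J u) = - u" and "\<alpha> \<in> Lambda3"
  shows "PiJ J (PiJ J \<alpha>) = PiJ J \<alpha>"
  using PiJ_fixes_Lambda3_J[OF assms(2) PiJ_Lambda3_J[OF assms]] .

lemma image_PiJ_Lambda3:
  assumes "linear J" and JJ: "\<And>u. J (J u) = - u"
  shows "PiJ J ` Lambda3 = Lambda3_J J"
proof
  show "PiJ J ` Lambda3 \<subseteq> Lambda3_J J"
    using PiJ_Lambda3_J[OF assms] by blast
  show "Lambda3_J J \<subseteq> PiJ J ` Lambda3"
  proof
    fix \<alpha> assume "\<alpha> \<in> Lambda3_J J"
    then have "\<alpha> = PiJ J \<alpha>" and "\<alpha> \<in> Lambda3"
      using PiJ_fixes_Lambda3_J[OF JJ] unfolding Lambda3_J_def by auto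
    then show "\<alpha> \<in> PiJ J ` Lambda3" by blast
  qed
qed

lemma image_dJ_E_Lambda11:
  assumes lin: "linear J" and JJ: "\<And>u. J (J u) = - u"
  shows "dJ ` E_Lambda11 J = {\<alpha> \<in> Lambda3. PiJ J \<alpha> = (\<lambda>u v w. 0)}"
proof
  show "dJ ` E_Lambda11 J \<subseteq> {\<alpha> \<in> Lambda3. PiJ J \<alpha> = (\<lambda>u v w. 0)}"
    using dJ_E_Lambda11 PiJ_dJ_E_Lambda11[OF JJ] by auto
  show "{\<alpha> \<in> Lambda3. PiJ J \<alpha> = (\<lambda>u v w. 0)} \<subseteq> dJ ` E_Lambda11 J"
  proof
    fix \<alpha> assume "\<alpha> \<in> {\<alpha> \<in> Lambda3. PiJ J \<alpha> = (\<lambda>u v w. 0)}"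
    then have \<alpha>: "\<alpha> \<in> Lambda3" and ker: "PiJ J \<alpha> = (\<lambda>u v w. 0)" by auto
    have "\<alpha> = dJ (dJ_lift J \<alpha>)"
      using dJ_dJ_lift[of \<alpha> J, OF Lambda3_cyclic[OF \<alpha>]] ker by simp
    with dJ_lift_E_Lambda11[OF lin JJ \<alpha>] show "\<alpha> \<in> dJ ` E_Lambda11 J" by blast
  qed
qed

theorem lemma3p1:
  fixes g :: "'a::euclidean_space \<Rightarrow> 'a \<Rightarrow> real" and J :: "'a \<Rightarrow> 'a"
  assumes "nondeg_sym_form g" and "gen_almost_complex g J"
  shows "(\<forall>\<alpha>\<in>Lambda3. PiJ J (PiJ J \<alpha>) = PiJ J \<alpha>)
       \<and> PiJ J ` Lambda3 = Lambda3_J J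
       \<and> dJ ` E_Lambda11 J = {\<alpha> \<in> Lambda3. PiJ J \<alpha> = (\<lambda>u v w. 0)}"
proof -
  have "linear J" and "\<And>u. J (J u) = - u"
    using assms(2) unfolding gen_almost_complex_def by blast+
  then show ?thesis
    using PiJ_idem image_PiJ_Lambda3 image_dJ_E_Lambda11 by blast
qed

end
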